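(* Let $\mathbf v_1$ and $\mathbf v_2$ be words. If the set of letters occurring in $\mathbf v_2$ is $\{x_1,x_2,\dots,x_n\}$ (with $x_1,\dots,x_n$ distinct) and each of these letters occurs in $\mathbf v_1$, then the identity $\mathbf v_1\mathbf v_2\approx\mathbf v_1x_1x_2\cdots x_n$ holds in the variety $\mathbf O$.
   Context: Words are elements of the free monoid over a countably infinite alphabet. $\mathbf O$ is the monoid variety defined by the identities $x^2y^2\approx y^2x^2$ and $xzxyxty\approx xzyxty$. *)

theory Defs
  imports Main
begin

definition word_eval :: "(nat \<Rightarrow> 'a::monoid_mult) \<Rightarrow> nat list \<Rightarrow> 'a" where
  "word_eval h w = prod_list (map h w)"

definition in_O :: "'a::monoid_mult itself \<Rightarrow> bool" where
  "in_O _ \<longleftrightarrow>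
     (\<forall>x y :: 'a. x * x * y * y = y * y * x * x) \<and>
     (\<forall>x y z t :: 'a. x * z * x * y * x * t * y = x * z * y * x * t * y)"

text \<open>An identity u = v holds in O iff it holds in every monoid of O under every
  assignment; the type variable is universally quantified at theorem level.\<close>
definition holds_in :: "'a::monoid_mult itself \<Rightarrow> nat list \<Rightarrow> nat list \<Rightarrow> bool" where
  "holds_in T u v \<longleftrightarrow> (\<forall>h :: nat \<Rightarrow> 'a. word_eval h u = word_eval h v)"

end

theory Submission
  imports Defs
begin

text \<open>Instantiating xzxyxty = xzyxty at y = t = 1 gives xzxx = xzx, so A a a = A a whenever the
  letter a occurs in A.  Combined with x^2y^2 = y^2x^2 this yields A a b = A b a whenever a and b
  both occur in A.  Hence after a prefix containing all its letters, the value of a word depends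
  only on its set of letters.\<close>

definition factor_of :: "'a::monoid_mult \<Rightarrow> 'a \<Rightarrow> bool" where
  "factor_of a A \<longleftrightarrow> (\<exists>p q. A = p * a * q)"

lemma factor_of_mult_right: "factor_of a A \<Longrightarrow> factor_of a (A * m)"
  unfolding factor_of_def by (metis mult.assoc)

lemma word_eval_Nil [simp]: "word_eval h [] = 1"
  by (simp add: word_eval_def)

lemma word_eval_Cons [simp]: "word_eval h (c # w) = h c * word_eval h w"
  by (simp add: word_eval_def)

lemma word_eval_append [simp]: "word_eval h (u @ w) = word_eval h u * word_eval h w"
  by (simp add: word_eval_def)

lemma factor_of_word_eval:
  assumes "c \<in> set w"
  shows "factor_of (h c) (word_eval h w)"
proof -
  obtain p q where "w = p @ c # q" using assms split_list by metis
  then show ?thesis unfolding factor_of_def by (auto simp: mult.assoc)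
qed

lemma O_idem_after_factor:
  assumes O: "in_O TYPE('a::monoid_mult)" and "factor_of (a::'a) A"
  shows "A * a * a = A * a"
proof -
  obtain p q where A: "A = p * a * q" using assms(2) unfolding factor_of_def by blast
  have "a * q * a * 1 * a * 1 * 1 = a * q * 1 * a * 1 * 1"
    using O unfolding in_O_def by blast
  then have "p * (a * q * a * a) = p * (a * q * a)" by simp
  then show ?thesis using A by (simp add: mult.assoc)
qed

lemma O_commute_after_factors:
  assumes O: "in_O TYPE('a::monoid_mult)" and a: "factor_of (a::'a) A" and b: "factor_of b A"
  shows "A * a * b = A * b * a"
proof -
  have square_comm: "a * a * b * b = b * b * a * a" using O unfolding in_O_def by blast
  have "A * a * b = A * a * a * b" using O_idem_after_factor[OF O a] by simp
  also have "\<dots> = A * a * a * b * b"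
    using O_idem_after_factor[OF O factor_of_mult_right[OF b, of "a * a"]] by (simp add: mult.assoc)
  also have "\<dots> = A * (a * a * b * b)" by (simp add: mult.assoc)
  also have "\<dots> = A * (b * b * a * a)" by (simp add: square_comm)
  also have "\<dots> = A * b * b * a * a" by (simp add: mult.assoc)
  also have "\<dots> = A * b * b * a"
    using O_idem_after_factor[OF O factor_of_mult_right[OF a, of "b * b"]] by (simp add: mult.assoc)
  also have "\<dots> = A * b * a" using O_idem_after_factor[OF O b] by simp
  finally show ?thesis .
qed

lemma O_commute_letter_word:
  assumes O: "in_O TYPE('a::monoid_mult)"
    and "\<forall>b \<in> set w. factor_of (h b) (A::'a)" and "factor_of (h c) A"
  shows "A * word_eval h w * h c = A * h c * word_eval h w"
  using assms(2,3)
proof (induction w arbitrary: A)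
  case Nil
  then show ?case by simp
next
  case (Cons b w)
  have "A * word_eval h (b # w) * h c = (A * h b) * word_eval h w * h c"
    by (simp add: mult.assoc)
  also have "\<dots> = A * h b * h c * word_eval h w"
    using Cons by (simp add: factor_of_mult_right)
  also have "\<dots> = A * h c * h b * word_eval h w"
    using O_commute_after_factors[OF O] Cons.prems by simp
  finally show ?case by (simp add: mult.assoc)
qed

lemma O_commute_words:
  assumes O: "in_O TYPE('a::monoid_mult)"
    and "\<forall>b \<in> set u. factor_of (h b) (A::'a)" and "\<forall>c \<in> set w. factor_of (h c) A"
  shows "A * word_eval h u * word_eval h w = A * word_eval h w * word_eval h u"
  using assms(2,3)
proof (induction w arbitrary: A)
  case Nil
  then show ?case by simp
next
  case (Cons c w)
  have "A * word_eval h u * word_eval h (c # w) = A * word_eval h u * h c * word_eval h w"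
    by (simp add: mult.assoc)
  also have "\<dots> = (A * h c) * word_eval h u * word_eval h w"
    using O_commute_letter_word[OF O] Cons.prems by simp
  also have "\<dots> = (A * h c) * word_eval h w * word_eval h u"
    using Cons by (simp add: factor_of_mult_right)
  finally show ?case by (simp add: mult.assoc)
qed

lemma O_absorb_letter:
  assumes O: "in_O TYPE('a::monoid_mult)"
    and w: "\<forall>b \<in> set w. factor_of (h b) (A::'a)" and "c \<in> set w"
  shows "A * word_eval h w * h c = A * word_eval h w"
proof -
  obtain p q where pq: "w = p @ c # q" using \<open>c \<in> set w\<close> split_list by metis
  let ?B = "A * word_eval h p * h c"
  have "A * word_eval h w * h c = ?B * word_eval h q * h c"
    using pq by (simp add: mult.assoc)
  also have "\<dots> = ?B * h c * word_eval h q"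
    using O_commute_letter_word[OF O] w pq by (simp add: factor_of_mult_right)
  also have "\<dots> = ?B * word_eval h q"
    using O_idem_after_factor[OF O factor_of_mult_right[of "h c" A]] w pq by simp
  finally show ?thesis using pq by (simp add: mult.assoc)
qed

lemma O_absorb_word:
  assumes O: "in_O TYPE('a::monoid_mult)"
    and "\<forall>b \<in> set u. factor_of (h b) (A::'a)" and "set w \<subseteq> set u"
  shows "A * word_eval h u * word_eval h w = A * word_eval h u"
  using assms(3)
proof (induction w)
  case Nil
  then show ?case by simp
next
  case (Cons c w)
  then show ?case
    using O_absorb_letter[OF O assms(2), of c] by (simp flip: mult.assoc)
qed

lemma O_word_eval_eq_if_same_letters:
  assumes O: "in_O TYPE('a::monoid_mult)"
    and "\<forall>b \<in> set u. factor_of (h b) (A::'a)" and "set u = set w"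
  shows "A * word_eval h u = A * word_eval h w"
proof -
  have w: "\<forall>c \<in> set w. factor_of (h c) A" using assms(2,3) by simp
  have "A * word_eval h u = A * word_eval h u * word_eval h w"
    using O_absorb_word[OF O assms(2)] assms(3) by simp
  also have "\<dots> = A * word_eval h w * word_eval h u"
    using O_commute_words[OF O assms(2) w] .
  also have "\<dots> = A * word_eval h w"
    using O_absorb_word[OF O w] assms(3) by simp
  finally show ?thesis .
qed

theorem lemma3p4:
  fixes v1 v2 xs :: "nat list"
  assumes "distinct xs"
    and "set xs = set v2"
    and "set v2 \<subseteq> set v1"
    and "in_O TYPE('a::monoid_mult)"
  shows "holds_in TYPE('a) (v1 @ v2) (v1 @ xs)"
  unfolding holds_in_def
proof
  fix h :: "nat \<Rightarrow> 'a"
  have "\<forall>b \<in> set v2. factor_of (h b) (word_eval h v1)"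
    using assms(3) by (auto intro: factor_of_word_eval)
  from O_word_eval_eq_if_same_letters[OF assms(4) this assms(2)[symmetric]]
  show "word_eval h (v1 @ v2) = word_eval h (v1 @ xs)" by simp
qed

end
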